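(* Let $I=(N,O,\succsim)$ be a general instance and $p$ a generalized deterministic matching for $I$, with associated deterministic matching $p'$ for the associated instance $I'=(N',O',\succsim')$. Then $p$ has no envy, is individually rational and is non-wasteful if and only if $p'$ is weakly stable.
   Context: General instance: $N=\{1,\dots,n\}$ is a set of agents and $O=\{o_1,\dots,o_m\}$ a set of objects ($m,n\ge1$ arbitrary); $\emptyset$ denotes the null object (being unmatched). Each agent $i$ has a weak order $\succsim_i$ over $O\cup\{\emptyset\}$ and each object $o$ a weak order $\succsim_o$ over $N\cup\{\emptyset\}$, such that for each $(i,o)$ either $o\succ_i\emptyset$ or $\emptyset\succ_i o$, and either $i\succ_o\emptyset$ or $\emptyset\succ_o i$. $o$ is acceptable to $i$ if $o\succ_i\emptyset$, $i$ is acceptable to $o$ if $i\succ_o\emptyset$; $(i,o)$ is an acceptable pair if both hold. A generalized random matching is an $n\times m$ matrix $p$ with $p(i,o)\ge0$, $\sum_{o}p(i,o)\le1$ for each $i$, $\sum_i p(i,o)\le1$ for each $o$; it is deterministic if all entries are in $\{0,1\}$. $p$ has no envy if there exist no $i,j\in N$, $o\in O$ with $o\succ_i\emptyset$, $\sum_{o':o'\succsim_i o}p(i,o')=0$, $p(j,o)=1$ and $i\succ_o j$. $p$ is non-wasteful if there is no acceptable pair $(i,o)$ with $\sum_{o':o'\succsim_i o}p(i,o')<1$ and $\sum_{j\in N}p(j,o)<1$. $p$ is individually rational if $p(i,o)=0$ whenever $o$ is unacceptable to $i$ or $i$ is unacceptable to $o$. Associated instance: $D=\{d_1,\dots,d_m\}$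 (dummy agents), $\Phi=\{\phi_1,\dots,\phi_n\}$ (null objects), $N'=N\cup D$, $O'=O\cup\Phi$. Weak orders $\succsim'$ (blocks listed from best to worst, consecutive blocks strictly ordered): for $i\in N$: the objects acceptable to $i$ ordered by $\succsim_i$, then $\phi_i$, then $\phi_k$ ($k\ne i$) in increasing index, then the objects unacceptable to $i$ ordered by $\succsim_i$; for $o_j\in O$: agents acceptable to $o_j$ ordered by $\succsim_{o_j}$, then $d_j$, then $d_k$ ($k\neq j$) in increasing index, then agents unacceptable to $o_j$ ordered by $\succsim_{o_j}$; for $d_j$: $o_j$, then the other objects of $O$ in increasing index, then the null objects with $\phi_k\succsim'_{d_j}\phi_l$ iff $k\succsim_{o_j}l$; for $\phi_i$: $i$, then the other agents of $N$ in increasing index, then the dummy agents with $d_k\succsim'_{\phi_i}d_l$ iff $o_k\succsim_i o_l$. The associated matching $p'$ is the $(n+m)\times(n+m)$ matrix with $p'(i,o_j)=p(i,o_j)$, $p'(d_j,\phi_i)=p(i,o_j)$, $p'(i,\phi_i)=1-\sum_{o\in O}p(i,o)$, $p'(d_j,o_j)=1-\sum_{i\in N}p(i,o_j)$ and all other entries $0$. A deterministic matching $q$ for $I'$ is weakly stable if there are no $a,b\in N'$, $c,c'\in O'$ with $q(a,c')=1$, $q(b,c)=1$, $c\succ'_a c'$ and $a\succ'_c b$. *)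

theory Defs
  imports Main "HOL.Real"
begin

text \<open>Agents are indexed 0..<n, objects 0..<m (the paper uses 1..n, 1..m; only the
order of indices matters). The null object / being unmatched is None.
An agent preference P i x y means x \<succsim>_i y on objects-or-None;
an object preference Q j x y means x \<succsim>_{o_j} y on agents-or-None.\<close>

definition weak_order_on :: "'a set \<Rightarrow> ('a \<Rightarrow> 'a \<Rightarrow> bool) \<Rightarrow> bool" where
  "weak_order_on A R \<longleftrightarrow>
     (\<forall>x\<in>A. \<forall>y\<in>A. R x y \<or> R y x) \<and>
     (\<forall>x\<in>A. \<forall>y\<in>A. \<forall>z\<in>A. R x y \<longrightarrow> R y z \<longrightarrow> R x z)"

definition strict :: "('a \<Rightarrow> 'a \<Rightarrow> bool) \<Rightarrow> 'a \<Rightarrow> 'a \<Rightarrow> bool" where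
  "strict R x y \<longleftrightarrow> R x y \<and> \<not> R y x"

definition general_instance ::
  "nat \<Rightarrow> nat \<Rightarrow> (nat \<Rightarrow> nat option \<Rightarrow> nat option \<Rightarrow> bool)
       \<Rightarrow> (nat \<Rightarrow> nat option \<Rightarrow> nat option \<Rightarrow> bool) \<Rightarrow> bool" where
  "general_instance n m P Q \<longleftrightarrow>
     n \<ge> 1 \<and> m \<ge> 1 \<and>
     (\<forall>i<n. weak_order_on (insert None (Some ` {..<m})) (P i)) \<and>
     (\<forall>j<m. weak_order_on (insert None (Some ` {..<n})) (Q j)) \<and>
     (\<forall>i<n. \<forall>j<m. (strict (P i) (Some j) None \<or> strict (P i) None (Some j)) \<and>
                   (strict (Q j) (Some i) None \<or> strict (Q j) None (Some i)))"

definition agent_acc :: "(nat \<Rightarrow> nat option \<Rightarrow> nat option \<Rightarrow> bool) \<Rightarrow> nat \<Rightarrow> nat \<Rightarrow> bool" where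
  "agent_acc P i j \<longleftrightarrow> strict (P i) (Some j) None"

definition obj_acc :: "(nat \<Rightarrow> nat option \<Rightarrow> nat option \<Rightarrow> bool) \<Rightarrow> nat \<Rightarrow> nat \<Rightarrow> bool" where
  "obj_acc Q j i \<longleftrightarrow> strict (Q j) (Some i) None"

definition gen_random_matching :: "nat \<Rightarrow> nat \<Rightarrow> (nat \<Rightarrow> nat \<Rightarrow> real) \<Rightarrow> bool" where
  "gen_random_matching n m p \<longleftrightarrow>
     (\<forall>i<n. \<forall>j<m. p i j \<ge> 0) \<and>
     (\<forall>i<n. (\<Sum>j<m. p i j) \<le> 1) \<and>
     (\<forall>j<m. (\<Sum>i<n. p i j) \<le> 1)"

definition gen_det_matching :: "nat \<Rightarrow> nat \<Rightarrow> (nat \<Rightarrow> nat \<Rightarrow> real) \<Rightarrow> bool" where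
  "gen_det_matching n m p \<longleftrightarrow>
     gen_random_matching n m p \<and> (\<forall>i<n. \<forall>j<m. p i j \<in> {0, 1})"

definition upper_mass ::
  "nat \<Rightarrow> (nat \<Rightarrow> nat option \<Rightarrow> nat option \<Rightarrow> bool) \<Rightarrow> (nat \<Rightarrow> nat \<Rightarrow> real) \<Rightarrow> nat \<Rightarrow> nat \<Rightarrow> real" where
  "upper_mass m P p i ob = (\<Sum>ob'\<in>{ob'. ob' < m \<and> P i (Some ob') (Some ob)}. p i ob')"

definition no_envy ::
  "nat \<Rightarrow> nat \<Rightarrow> (nat \<Rightarrow> nat option \<Rightarrow> nat option \<Rightarrow> bool)
       \<Rightarrow> (nat \<Rightarrow> nat option \<Rightarrow> nat option \<Rightarrow> bool) \<Rightarrow> (nat \<Rightarrow> nat \<Rightarrow> real) \<Rightarrow> bool" where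
  "no_envy n m P Q p \<longleftrightarrow>
     \<not> (\<exists>i<n. \<exists>k<n. \<exists>ob<m. strict (P i) (Some ob) None \<and> upper_mass m P p i ob = 0 \<and>
            p k ob = 1 \<and> strict (Q ob) (Some i) (Some k))"

definition non_wasteful ::
  "nat \<Rightarrow> nat \<Rightarrow> (nat \<Rightarrow> nat option \<Rightarrow> nat option \<Rightarrow> bool)
       \<Rightarrow> (nat \<Rightarrow> nat option \<Rightarrow> nat option \<Rightarrow> bool) \<Rightarrow> (nat \<Rightarrow> nat \<Rightarrow> real) \<Rightarrow> bool" where
  "non_wasteful n m P Q p \<longleftrightarrow>
     \<not> (\<exists>i<n. \<exists>ob<m. agent_acc P i ob \<and> obj_acc Q ob i \<and>
            upper_mass m P p i ob < 1 \<and> (\<Sum>k<n. p k ob) < 1)"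

definition individually_rational ::
  "nat \<Rightarrow> nat \<Rightarrow> (nat \<Rightarrow> nat option \<Rightarrow> nat option \<Rightarrow> bool)
       \<Rightarrow> (nat \<Rightarrow> nat option \<Rightarrow> nat option \<Rightarrow> bool) \<Rightarrow> (nat \<Rightarrow> nat \<Rightarrow> real) \<Rightarrow> bool" where
  "individually_rational n m P Q p \<longleftrightarrow>
     (\<forall>i<n. \<forall>ob<m. (strict (P i) None (Some ob) \<or> strict (Q ob) None (Some i)) \<longrightarrow> p i ob = 0)"

text \<open>N' = N \<union> D (Ag i, Dum j = d_j), O' = O \<union> \<Phi> (Ob j = o_j, Nul i = \<phi>_i).\<close>
datatype agent' = Ag nat | Dum nat
datatype obj' = Ob nat | Nul nat

definition agents' :: "nat \<Rightarrow> nat \<Rightarrow> agent' set" where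
  "agents' n m = Ag ` {..<n} \<union> Dum ` {..<m}"

definition objs' :: "nat \<Rightarrow> nat \<Rightarrow> obj' set" where
  "objs' n m = Ob ` {..<m} \<union> Nul ` {..<n}"

definition block_pref :: "('a \<Rightarrow> nat) \<Rightarrow> ('a \<Rightarrow> 'a \<Rightarrow> bool) \<Rightarrow> 'a \<Rightarrow> 'a \<Rightarrow> bool" where
  "block_pref cls w x y \<longleftrightarrow> cls x < cls y \<or> (cls x = cls y \<and> w x y)"

fun ag_cls :: "(nat \<Rightarrow> nat option \<Rightarrow> nat option \<Rightarrow> bool) \<Rightarrow> nat \<Rightarrow> obj' \<Rightarrow> nat" where
  "ag_cls P i (Ob j) = (if agent_acc P i j then 0 else 3)"
| "ag_cls P i (Nul k) = (if k = i then 1 else 2)"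

fun ag_within :: "(nat \<Rightarrow> nat option \<Rightarrow> nat option \<Rightarrow> bool) \<Rightarrow> nat \<Rightarrow> obj' \<Rightarrow> obj' \<Rightarrow> bool" where
  "ag_within P i (Ob j) (Ob j') = P i (Some j) (Some j')"
| "ag_within P i (Nul k) (Nul l) = (k \<le> l)"
| "ag_within P i _ _ = False"

fun dum_cls :: "nat \<Rightarrow> obj' \<Rightarrow> nat" where
  "dum_cls j (Ob k) = (if k = j then 0 else 1)"
| "dum_cls j (Nul k) = 2"

fun dum_within :: "(nat \<Rightarrow> nat option \<Rightarrow> nat option \<Rightarrow> bool) \<Rightarrow> nat \<Rightarrow> obj' \<Rightarrow> obj' \<Rightarrow> bool" where
  "dum_within Q j (Ob k) (Ob l) = (k \<le> l)"
| "dum_within Q j (Nul k) (Nul l) = Q j (Some k) (Some l)"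
| "dum_within Q j _ _ = False"

fun assoc_agent_pref ::
  "(nat \<Rightarrow> nat option \<Rightarrow> nat option \<Rightarrow> bool) \<Rightarrow> (nat \<Rightarrow> nat option \<Rightarrow> nat option \<Rightarrow> bool)
     \<Rightarrow> agent' \<Rightarrow> obj' \<Rightarrow> obj' \<Rightarrow> bool" where
  "assoc_agent_pref P Q (Ag i) = block_pref (ag_cls P i) (ag_within P i)"
| "assoc_agent_pref P Q (Dum j) = block_pref (dum_cls j) (dum_within Q j)"

fun ob_cls :: "(nat \<Rightarrow> nat option \<Rightarrow> nat option \<Rightarrow> bool) \<Rightarrow> nat \<Rightarrow> agent' \<Rightarrow> nat" where
  "ob_cls Q j (Ag i) = (if obj_acc Q j i then 0 else 3)"
| "ob_cls Q j (Dum k) = (if k = j then 1 else 2)"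

fun ob_within :: "(nat \<Rightarrow> nat option \<Rightarrow> nat option \<Rightarrow> bool) \<Rightarrow> nat \<Rightarrow> agent' \<Rightarrow> agent' \<Rightarrow> bool" where
  "ob_within Q j (Ag i) (Ag i') = Q j (Some i) (Some i')"
| "ob_within Q j (Dum k) (Dum l) = (k \<le> l)"
| "ob_within Q j _ _ = False"

fun nul_cls :: "nat \<Rightarrow> agent' \<Rightarrow> nat" where
  "nul_cls i (Ag k) = (if k = i then 0 else 1)"
| "nul_cls i (Dum k) = 2"

fun nul_within :: "(nat \<Rightarrow> nat option \<Rightarrow> nat option \<Rightarrow> bool) \<Rightarrow> nat \<Rightarrow> agent' \<Rightarrow> agent' \<Rightarrow> bool" where
  "nul_within P i (Ag k) (Ag l) = (k \<le> l)"
| "nul_within P i (Dum k) (Dum l) = P i (Some k) (Some l)"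
| "nul_within P i _ _ = False"

fun assoc_obj_pref ::
  "(nat \<Rightarrow> nat option \<Rightarrow> nat option \<Rightarrow> bool) \<Rightarrow> (nat \<Rightarrow> nat option \<Rightarrow> nat option \<Rightarrow> bool)
     \<Rightarrow> obj' \<Rightarrow> agent' \<Rightarrow> agent' \<Rightarrow> bool" where
  "assoc_obj_pref P Q (Ob j) = block_pref (ob_cls Q j) (ob_within Q j)"
| "assoc_obj_pref P Q (Nul i) = block_pref (nul_cls i) (nul_within P i)"

fun assoc_matching :: "nat \<Rightarrow> nat \<Rightarrow> (nat \<Rightarrow> nat \<Rightarrow> real) \<Rightarrow> agent' \<Rightarrow> obj' \<Rightarrow> real" where
  "assoc_matching n m p (Ag i) (Ob j) = p i j"
| "assoc_matching n m p (Dum j) (Nul i) = p i j"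
| "assoc_matching n m p (Ag i) (Nul k) = (if k = i then 1 - (\<Sum>j<m. p i j) else 0)"
| "assoc_matching n m p (Dum j) (Ob k) = (if k = j then 1 - (\<Sum>i<n. p i j) else 0)"

definition weakly_stable ::
  "agent' set \<Rightarrow> obj' set \<Rightarrow> (agent' \<Rightarrow> obj' \<Rightarrow> obj' \<Rightarrow> bool) \<Rightarrow> (obj' \<Rightarrow> agent' \<Rightarrow> agent' \<Rightarrow> bool)
     \<Rightarrow> (agent' \<Rightarrow> obj' \<Rightarrow> real) \<Rightarrow> bool" where
  "weakly_stable Nset Oset RA RO q \<longleftrightarrow>
     \<not> (\<exists>a\<in>Nset. \<exists>b\<in>Nset. \<exists>c\<in>Oset. \<exists>c'\<in>Oset.
          q a c' = 1 \<and> q b c = 1 \<and> strict (RA a) c c' \<and> strict (RO c) a b)"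

end

theory Submission
  imports Defs
begin

text \<open>
  For a deterministic p, the associated matching p' is a perfect deterministic matching of N' with
  O': agent i holds o_j if p(i,o_j) = 1 and its own null object \<phi>_i otherwise, and the dummy d_j
  holds \<phi>_i if p(i,o_j) = 1 and its own object o_j otherwise. The block structure of the
  associated preferences makes blocking pairs of p' correspond exactly to the three defects of p:
  an agent i blocking with o_j is envy if o_j is held by an agent and waste if it is held by d_j;
  a dummy d_j blocking with \<phi>_l means that l envies the holder of o_j; and an unacceptable matched
  pair (i,o_j) is blocked by (i,\<phi>_i) or by (d_j,o_j). All other combinations
  are excluded by the block structure of the associated preferences, using individual rationality
  for matched pairs.
\<close>


lemma strict_block_pref_iff:
  "strict (block_pref cls w) x y \<longleftrightarrow> cls x < cls y \<or> (cls x = cls y \<and> strict w x y)"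
  unfolding strict_def block_pref_def by auto

lemma weak_order_on_strict_trans:
  assumes "weak_order_on A R" "x \<in> A" "y \<in> A" "z \<in> A" "R x y" "strict R y z"
  shows "strict R x z"
  using assms unfolding weak_order_on_def strict_def by blast

lemma weak_order_on_not_le_imp_strict:
  assumes "weak_order_on A R" "x \<in> A" "y \<in> A" "\<not> R y x"
  shows "strict R x y"
  using assms unfolding weak_order_on_def strict_def by blast

lemma sum_zero_one_eq_card:
  fixes f :: "'a \<Rightarrow> 'b :: comm_semiring_1"
  assumes "finite A" "\<And>x. x \<in> A \<Longrightarrow> f x \<in> {0, 1}"
  shows "sum f A = of_nat (card {x \<in> A. f x = 1})"
proof -
  have "sum f A = (\<Sum>x\<in>A. of_bool (f x = 1))"
    by (rule sum.cong) (use assms(2) in auto)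
  also have "\<dots> = of_nat (card {x \<in> A. f x = 1})"
    using assms(1) by (simp add: Int_def conj_commute)
  finally show ?thesis .
qed

lemma sum_zero_one_le_one_unique:
  fixes f :: "'a \<Rightarrow> 'b :: linordered_semidom"
  assumes "finite A" "\<And>x. x \<in> A \<Longrightarrow> f x \<in> {0, 1}" "sum f A \<le> 1"
    and "x \<in> A" "y \<in> A" "f x = 1" "f y = 1"
  shows "x = y"
proof -
  have "card {x \<in> A. f x = 1} \<le> Suc 0"
    using assms(3) sum_zero_one_eq_card[of A f, OF assms(1,2)] by simp
  then show ?thesis
    using assms(1,4-) by (subst (asm) card_le_Suc0_iff_eq) auto
qed

lemma sum_zero_one_le_one_eq:
  fixes f :: "'a \<Rightarrow> 'b :: linordered_semidom"
  assumes "finite A" "\<And>x. x \<in> A \<Longrightarrow> f x \<in> {0, 1}" "sum f A \<le> 1"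
  shows "sum f A = (if \<exists>x\<in>A. f x = 1 then 1 else 0)"
proof (cases "\<exists>x\<in>A. f x = 1")
  case True
  then obtain x where "x \<in> A" "f x = 1" by blast
  then have "{y \<in> A. f y = 1} = {x}"
    using sum_zero_one_le_one_unique[of A f, OF assms] by blast
  then show ?thesis using True sum_zero_one_eq_card[of A f, OF assms(1,2)] by simp
next
  case False
  then have "{y \<in> A. f y = 1} = {}" by blast
  then show ?thesis using False sum_zero_one_eq_card[of A f, OF assms(1,2)] by (simp only: card.empty) simp
qed

locale deterministic_instance =
  fixes n m :: nat
    and P Q :: "nat \<Rightarrow> nat option \<Rightarrow> nat option \<Rightarrow> bool"
    and p :: "nat \<Rightarrow> nat \<Rightarrow> real"
  assumes general_instance: "general_instance n m P Q"
    and deterministic: "gen_det_matching n m p"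
begin

abbreviation "p' \<equiv> assoc_matching n m p"
abbreviation "agent_pref' \<equiv> assoc_agent_pref P Q"
abbreviation "obj_pref' \<equiv> assoc_obj_pref P Q"

lemma P_weak_order: "i < n \<Longrightarrow> weak_order_on (insert None (Some ` {..<m})) (P i)"
  using general_instance unfolding general_instance_def by blast

lemma Q_weak_order: "j < m \<Longrightarrow> weak_order_on (insert None (Some ` {..<n})) (Q j)"
  using general_instance unfolding general_instance_def by blast

lemma agent_acc_or_unacceptable:
  "i < n \<Longrightarrow> j < m \<Longrightarrow> agent_acc P i j \<or> strict (P i) None (Some j)"
  using general_instance unfolding general_instance_def agent_acc_def by blast

lemma obj_acc_or_unacceptable:
  "i < n \<Longrightarrow> j < m \<Longrightarrow> obj_acc Q j i \<or> strict (Q j) None (Some i)"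
  using general_instance unfolding general_instance_def obj_acc_def by blast

lemma entry_zero_one: "i < n \<Longrightarrow> j < m \<Longrightarrow> p i j \<in> {0, 1}"
  using deterministic unfolding gen_det_matching_def by blast

lemma row_sum: "i < n \<Longrightarrow> (\<Sum>j<m. p i j) = (if \<exists>j<m. p i j = 1 then 1 else 0)"
  using deterministic entry_zero_one
  by (subst sum_zero_one_le_one_eq) (auto simp: gen_det_matching_def gen_random_matching_def)

lemma column_sum: "j < m \<Longrightarrow> (\<Sum>i<n. p i j) = (if \<exists>i<n. p i j = 1 then 1 else 0)"
  using deterministic entry_zero_one
  by (subst sum_zero_one_le_one_eq) (auto simp: gen_det_matching_def gen_random_matching_def)

lemma matched_object_unique:
  assumes "i < n" "j < m" "j' < m" "p i j = 1" "p i j' = 1"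
  shows "j = j'"
  using deterministic entry_zero_one assms
  by (intro sum_zero_one_le_one_unique[of "{..<m}" "p i"])
    (auto simp: gen_det_matching_def gen_random_matching_def)

lemma upper_mass_eq_card:
  assumes "i < n"
  shows "upper_mass m P p i j = card {j'. j' < m \<and> P i (Some j') (Some j) \<and> p i j' = 1}"
proof -
  have "upper_mass m P p i j = card {j' \<in> {j'. j' < m \<and> P i (Some j') (Some j)}. p i j' = 1}"
    unfolding upper_mass_def by (rule sum_zero_one_eq_card) (use assms entry_zero_one in auto)
  then show ?thesis by (simp add: conj_assoc)
qed

lemma upper_mass_less_one_iff:
  assumes "i < n"
  shows "upper_mass m P p i j < 1 \<longleftrightarrow> \<not> (\<exists>j'<m. p i j' = 1 \<and> P i (Some j') (Some j))"
proof -
  have "finite {j'. j' < m \<and> P i (Some j') (Some j) \<and> p i j' = 1}" by simp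
  then show ?thesis using assms by (auto simp: upper_mass_eq_card)
qed

lemma upper_mass_eq_zero_iff_less_one:
  assumes "i < n"
  shows "upper_mass m P p i j = 0 \<longleftrightarrow> upper_mass m P p i j < 1"
  using assms by (auto simp: upper_mass_eq_card)

lemma individually_rational_imp_acceptable:
  assumes "individually_rational n m P Q p" "i < n" "j < m" "p i j = 1"
  shows "agent_acc P i j \<and> obj_acc Q j i"
  using assms agent_acc_or_unacceptable obj_acc_or_unacceptable
  unfolding individually_rational_def by fastforce

lemma agent'_partner_exists:
  assumes "i < n"
  obtains c' where "c' \<in> objs' n m" "p' (Ag i) c' = 1"
proof (cases "\<exists>j<m. p i j = 1")
  case True
  then obtain j where "j < m" "p i j = 1" by blast
  then show ?thesis using that[of "Ob j"] by (simp add: objs'_def)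
next
  case False
  then show ?thesis using that[of "Nul i"] assms by (simp add: objs'_def row_sum)
qed

lemma agent'_partner_cases:
  assumes "i < n" "c' \<in> objs' n m" "p' (Ag i) c' = 1"
  obtains j' where "j' < m" "c' = Ob j'" "p i j' = 1"
    | "c' = Nul i" "\<forall>j<m. p i j \<noteq> 1"
  using assms by (auto simp: objs'_def row_sum split: if_splits)

lemma dummy'_partner_cases:
  assumes "j < m" "c' \<in> objs' n m" "p' (Dum j) c' = 1"
  obtains i where "i < n" "c' = Nul i" "p i j = 1"
    | "c' = Ob j" "\<forall>i<n. p i j \<noteq> 1"
  using assms by (auto simp: objs'_def column_sum split: if_splits)

lemma object'_partner_cases:
  assumes "j < m" "b \<in> agents' n m" "p' b (Ob j) = 1"
  obtains i where "i < n" "b = Ag i" "p i j = 1"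
    | "b = Dum j" "\<forall>i<n. p i j \<noteq> 1"
  using assms by (auto simp: agents'_def column_sum split: if_splits)

lemma null'_partner_cases:
  assumes "i < n" "b \<in> agents' n m" "p' b (Nul i) = 1"
  obtains j where "j < m" "b = Dum j" "p i j = 1"
    | "b = Ag i" "\<forall>j<m. p i j \<noteq> 1"
  using assms by (auto simp: agents'_def row_sum split: if_splits)

lemma agent'_prefers_Ob_iff:
  assumes "individually_rational n m P Q p" "i < n" "j < m"
    and "c' \<in> objs' n m" "p' (Ag i) c' = 1"
  shows "strict (agent_pref' (Ag i)) (Ob j) c' \<longleftrightarrow> agent_acc P i j \<and> upper_mass m P p i j < 1"
  using assms(2,4,5)
proof (cases rule: agent'_partner_cases)
  case (1 j')
  have acc: "agent_acc P i j'"
    using individually_rational_imp_acceptable[OF assms(1,2) 1(1,3)] by blast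
  have "upper_mass m P p i j < 1 \<longleftrightarrow> \<not> P i (Some j') (Some j)"
    unfolding upper_mass_less_one_iff[OF assms(2)]
    using matched_object_unique[OF assms(2) 1(1)] 1 by blast
  also have "\<dots> \<longleftrightarrow> strict (P i) (Some j) (Some j')"
    using weak_order_on_not_le_imp_strict[OF P_weak_order[OF assms(2)]] assms(3) 1(1)
    unfolding strict_def by blast
  finally show ?thesis
    using acc unfolding 1(2) by (simp add: strict_block_pref_iff) (simp add: strict_def)
next
  case 2
  then show ?thesis
    unfolding upper_mass_less_one_iff[OF assms(2)] by (auto simp: strict_block_pref_iff)
qed

lemma agent'_never_prefers_Nul:
  assumes "individually_rational n m P Q p" "i < n" "c' \<in> objs' n m" "p' (Ag i) c' = 1"
  shows "\<not> strict (agent_pref' (Ag i)) (Nul l) c'"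
  using assms(2-4)
proof (cases rule: agent'_partner_cases)
  case (1 j')
  then show ?thesis
    using individually_rational_imp_acceptable[OF assms(1,2) 1(1,3)] by (simp add: strict_block_pref_iff)
next
  case 2
  then show ?thesis by (simp add: strict_block_pref_iff) (simp add: strict_def block_pref_def)
qed

lemma no_blocking_pair_at_agent:
  assumes "no_envy n m P Q p" "individually_rational n m P Q p" "non_wasteful n m P Q p"
    and "i < n" "b \<in> agents' n m" "c \<in> objs' n m" "c' \<in> objs' n m"
    and "p' (Ag i) c' = 1" "p' b c = 1"
    and "strict (agent_pref' (Ag i)) c c'" "strict (obj_pref' c) (Ag i) b"
  shows False
proof -
  obtain j where j: "j < m" "c = Ob j"
    using assms(6,10) agent'_never_prefers_Nul[OF assms(2,4,7,8)] unfolding objs'_def by auto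
  have desired: "agent_acc P i j" "upper_mass m P p i j = 0"
    using assms(10) agent'_prefers_Ob_iff[OF assms(2,4) j(1) assms(7,8)] j(2)
      upper_mass_eq_zero_iff_less_one[OF assms(4)] by auto
  from j(1) assms(5) assms(9)[unfolded j(2)] show False
  proof (cases rule: object'_partner_cases)
    case (1 k)
    have "obj_acc Q j k"
      using individually_rational_imp_acceptable[OF assms(2) 1(1) j(1) 1(3)] by blast
    then have "strict (Q j) (Some i) (Some k)"
      using assms(11) 1(2) j(2) by (simp add: strict_block_pref_iff split: if_splits) (simp add: strict_def)
    then show False
      using assms(1,4) 1 j desired unfolding no_envy_def agent_acc_def by blast
  next
    case 2
    have "obj_acc Q j i"
      using assms(11) 2(1) j(2) by (simp add: strict_block_pref_iff split: if_splits)
    moreover have "(\<Sum>k<n. p k j) < 1"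
      using column_sum[OF j(1)] 2(2) by simp
    ultimately show False
      using assms(3,4) j(1) desired upper_mass_eq_zero_iff_less_one[OF assms(4)]
      unfolding non_wasteful_def by auto
  qed
qed

lemma object'_never_prefers_Dum:
  assumes "individually_rational n m P Q p" "k < m" "b \<in> agents' n m" "p' b (Ob k) = 1"
  shows "\<not> strict (obj_pref' (Ob k)) (Dum j) b"
  using assms(2-4)
proof (cases rule: object'_partner_cases)
  case (1 i)
  then show ?thesis
    using individually_rational_imp_acceptable[OF assms(1) 1(1) assms(2) 1(3)]
    by (simp add: strict_block_pref_iff)
next
  case 2
  then show ?thesis by (simp add: strict_block_pref_iff) (simp add: strict_def)
qed

lemma dummy'_prefers_imp_holds_Nul:
  assumes "j < m" "c \<in> objs' n m" "c' \<in> objs' n m" "p' (Dum j) c' = 1"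
    and "strict (agent_pref' (Dum j)) c c'"
  obtains i where "i < n" "c' = Nul i" "p i j = 1"
  using assms(1,3,4)
proof (cases rule: dummy'_partner_cases)
  case 2
  then show ?thesis
    using assms(2,5) unfolding objs'_def by (auto simp: block_pref_def strict_def)
qed

lemma no_blocking_pair_at_dummy:
  assumes "no_envy n m P Q p" "individually_rational n m P Q p"
    and "j < m" "b \<in> agents' n m" "c \<in> objs' n m" "c' \<in> objs' n m"
    and "p' (Dum j) c' = 1" "p' b c = 1"
    and "strict (agent_pref' (Dum j)) c c'" "strict (obj_pref' c) (Dum j) b"
  shows False
proof -
  obtain i where i: "i < n" "c' = Nul i" "p i j = 1"
    using dummy'_prefers_imp_holds_Nul[OF assms(3,5,6,7,9)] .
  from assms(5) obtain l where l: "l < n" "c = Nul l"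
    using object'_never_prefers_Dum[OF assms(2) _ assms(4)] assms(8,10) unfolding objs'_def by auto
  have preferred: "strict (Q j) (Some l) (Some i)"
    using assms(9) l(2) i(2) by (simp add: strict_block_pref_iff) (simp add: strict_def)
  from l(1) assms(4) assms(8)[unfolded l(2)] show False
  proof (cases rule: null'_partner_cases)
    case (1 j')
    have "strict (P l) (Some j) (Some j')"
      using assms(10) l(2) 1(2) by (simp add: strict_block_pref_iff) (simp add: strict_def)
    moreover have "agent_acc P l j'"
      using individually_rational_imp_acceptable[OF assms(2) l(1) 1(1,3)] by blast
    ultimately have "agent_acc P l j" "upper_mass m P p l j = 0"
      using weak_order_on_strict_trans[OF P_weak_order[OF l(1)]] assms(3) 1(1)
        matched_object_unique[OF l(1) 1(1) _ 1(3)]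
      by (auto simp: agent_acc_def strict_def upper_mass_eq_zero_iff_less_one[OF l(1)]
          upper_mass_less_one_iff[OF l(1)])
    then show False
      using assms(1,3) l(1) i preferred unfolding no_envy_def agent_acc_def by blast
  next
    case 2
    then show False using assms(10) l(2) by (simp add: strict_block_pref_iff)
  qed
qed

lemma no_envy_rational_non_wasteful_imp_weakly_stable:
  assumes "no_envy n m P Q p" "individually_rational n m P Q p" "non_wasteful n m P Q p"
  shows "weakly_stable (agents' n m) (objs' n m) agent_pref' obj_pref' p'"
  unfolding weakly_stable_def
proof clarify
  fix a b c c'
  assume "a \<in> agents' n m" and blocking: "b \<in> agents' n m" "c \<in> objs' n m" "c' \<in> objs' n m"
    "p' a c' = 1" "p' b c = 1" "strict (agent_pref' a) c c'" "strict (obj_pref' c) a b"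
  then consider i where "i < n" "a = Ag i" | j where "j < m" "a = Dum j"
    unfolding agents'_def by auto
  then show False
  proof cases
    case 1
    then show False using no_blocking_pair_at_agent[OF assms] blocking by blast
  next
    case 2
    then show False using no_blocking_pair_at_dummy[OF assms(1,2)] blocking by blast
  qed
qed

lemma weakly_stable_imp_individually_rational:
  assumes stable: "weakly_stable (agents' n m) (objs' n m) agent_pref' obj_pref' p'"
  shows "individually_rational n m P Q p"
  unfolding individually_rational_def
proof (intro allI impI)
  fix i j
  assume ij: "i < n" "j < m" and unacceptable: "strict (P i) None (Some j) \<or> strict (Q j) None (Some i)"
  show "p i j = 0"
  proof (rule ccontr)
    assume "p i j \<noteq> 0"
    with entry_zero_one ij have matched: "p i j = 1" by blast
    have members: "Ag i \<in> agents' n m" "Dum j \<in> agents' n m" "Ob j \<in> objs' n m" "Nul i \<in> objs' n m"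
      using ij by (auto simp: agents'_def objs'_def)
    from unacceptable show False
    proof
      assume "strict (P i) None (Some j)"
      then have "\<not> agent_acc P i j" by (auto simp: agent_acc_def strict_def)
      then have "strict (agent_pref' (Ag i)) (Nul i) (Ob j)" "strict (obj_pref' (Nul i)) (Ag i) (Dum j)"
        by (simp_all add: strict_block_pref_iff)
      then show False using stable members matched unfolding weakly_stable_def by force
    next
      assume "strict (Q j) None (Some i)"
      then have "\<not> obj_acc Q j i" by (auto simp: obj_acc_def strict_def)
      then have "strict (agent_pref' (Dum j)) (Ob j) (Nul i)" "strict (obj_pref' (Ob j)) (Dum j) (Ag i)"
        by (simp_all add: strict_block_pref_iff)
      then show False using stable members matched unfolding weakly_stable_def by force
    qed
  qed
qed

lemma weakly_stable_imp_no_envy: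
  assumes stable: "weakly_stable (agents' n m) (objs' n m) agent_pref' obj_pref' p'"
    and rational: "individually_rational n m P Q p"
  shows "no_envy n m P Q p"
  unfolding no_envy_def
proof clarify
  fix i k j
  assume ijk: "i < n" "k < n" "j < m" and envy: "strict (P i) (Some j) None" "upper_mass m P p i j = 0"
    "p k j = 1" "strict (Q j) (Some i) (Some k)"
  obtain c' where c': "c' \<in> objs' n m" "p' (Ag i) c' = 1"
    using agent'_partner_exists[OF ijk(1)] by blast
  have "strict (agent_pref' (Ag i)) (Ob j) c'"
    using agent'_prefers_Ob_iff[OF rational ijk(1,3) c'] envy(1,2) by (simp add: agent_acc_def)
  moreover have "obj_acc Q j k"
    using individually_rational_imp_acceptable[OF rational ijk(2,3) envy(3)] by blast
  then have "obj_acc Q j i"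
    using weak_order_on_strict_trans[OF Q_weak_order[OF ijk(3)], of "Some i" "Some k" None] ijk envy(4)
    unfolding obj_acc_def strict_def by auto
  then have "strict (obj_pref' (Ob j)) (Ag i) (Ag k)"
    using \<open>obj_acc Q j k\<close> envy(4) by (simp add: strict_block_pref_iff) (simp add: strict_def)
  moreover have "Ag i \<in> agents' n m" "Ag k \<in> agents' n m" "Ob j \<in> objs' n m"
    using ijk by (auto simp: agents'_def objs'_def)
  ultimately show False
    using stable c' envy(3) unfolding weakly_stable_def by force
qed

lemma weakly_stable_imp_non_wasteful:
  assumes stable: "weakly_stable (agents' n m) (objs' n m) agent_pref' obj_pref' p'"
    and rational: "individually_rational n m P Q p"
  shows "non_wasteful n m P Q p"
  unfolding non_wasteful_def
proof clarify
  fix i j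
  assume ij: "i < n" "j < m" and waste: "agent_acc P i j" "obj_acc Q j i"
    "upper_mass m P p i j < 1" "(\<Sum>k<n. p k j) < 1"
  obtain c' where c': "c' \<in> objs' n m" "p' (Ag i) c' = 1"
    using agent'_partner_exists[OF ij(1)] by blast
  have "strict (agent_pref' (Ag i)) (Ob j) c'"
    using agent'_prefers_Ob_iff[OF rational ij c'] waste(1,3) by blast
  moreover have "p' (Dum j) (Ob j) = 1"
    using column_sum[OF ij(2)] waste(4) by (simp split: if_splits)
  moreover have "strict (obj_pref' (Ob j)) (Ag i) (Dum j)"
    using waste(2) by (simp add: strict_block_pref_iff)
  moreover have "Ag i \<in> agents' n m" "Dum j \<in> agents' n m" "Ob j \<in> objs' n m"
    using ij by (auto simp: agents'_def objs'_def)
  ultimately show False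
    using stable c' unfolding weakly_stable_def by force
qed

end

theorem proposition20:
  fixes n m :: nat
    and P :: "nat \<Rightarrow> nat option \<Rightarrow> nat option \<Rightarrow> bool"
    and Q :: "nat \<Rightarrow> nat option \<Rightarrow> nat option \<Rightarrow> bool"
    and p :: "nat \<Rightarrow> nat \<Rightarrow> real"
  assumes "general_instance n m P Q"
    and "gen_det_matching n m p"
  shows "(no_envy n m P Q p \<and> individually_rational n m P Q p \<and> non_wasteful n m P Q p)
         \<longleftrightarrow> weakly_stable (agents' n m) (objs' n m) (assoc_agent_pref P Q) (assoc_obj_pref P Q)
                (assoc_matching n m p)"
proof -
  interpret deterministic_instance n m P Q p
    using assms by unfold_locales
  show ?thesis
    using no_envy_rational_non_wasteful_imp_weakly_stable weakly_stable_imp_individually_rational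
      weakly_stable_imp_no_envy weakly_stable_imp_non_wasteful by blast
qed

end
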